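(* $\Sigma^*\setminus L_{\mathrm{UNIQ}}\subseteq\bigcup_{x\in\Sigma}\bigcup_{a,b\in\Sigma\setminus\{x\}}K_{x,a,b}$; that is, every string $w\in\Sigma^*$ that is not uniquely decodable from its bigram counts belongs to $L_{\mathrm{OBST}}$.
   Context: Let $\Sigma$ be a finite alphabet and $\$\notin\Sigma$ a delimiter symbol; $\Sigma_\$=\Sigma\cup\{\$\}$. The bigram map $\Phi$ sends a string $z\in\$\Sigma^*\$$ to the vector $\Phi(z)\in\mathbb{N}^{\Sigma_\$^2}$ whose $(i,j)$ entry is the number of positions at which the two-letter string $ij$ occurs as a contiguous factor of $z$ (counting overlaps). $L_{\mathrm{UNIQ}}$ is the set of $w\in\Sigma^*$ such that the only $z\in\$\Sigma^*\$$ with $\Phi(z)=\Phi(\$w\$)$ is $z=\$w\$$. For $x\in\Sigma$ write $\Sigma_{\neg x}=\Sigma\setminus\{x\}$. For $x\in\Sigma$ and $a,b\in\Sigma_{\neg x}$ (with $a=b$ allowed) define $I_{x,a,b}=\Sigma^*\,a\,x\,\Sigma_{\neg a}^*\,b\,\Sigma^*$, $J_{x,a,b}=\Sigma^*\,a\,\Sigma_{\neg x}^*\,b\,\Sigma^*$ (regular-expression notation), $K_{x,a,b}=I_{x,a,b}\cap J_{x,a,b}$, and $L_{\mathrm{OBST}}=\bigcup_{x\in\Sigma}\bigcup_{a,b\in\Sigma_{\neg x}}K_{x,a,b}$. *)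

theory Defs
  imports Main
begin

text \<open>The alphabet Sigma is the finite type 'a. The extended alphabet Sigma_$ is 'a option,
  with None playing the role of the delimiter $ and Some c the letter c.\<close>

definition delim :: "'a list \<Rightarrow> 'a option list" where
  "delim w = None # map Some w @ [None]"

definition bigram :: "'b list \<Rightarrow> 'b \<Rightarrow> 'b \<Rightarrow> nat" where
  "bigram z i j = card {k. Suc k < length z \<and> z ! k = i \<and> z ! Suc k = j}"

definition L_UNIQ :: "('a::finite) list set" where
  "L_UNIQ = {w. \<forall>u. bigram (delim u) = bigram (delim w) \<longrightarrow> delim u = delim w}"

definition I_lang :: "'a \<Rightarrow> 'a \<Rightarrow> 'a \<Rightarrow> ('a::finite) list set" where
  "I_lang x a b = {w. \<exists>p v s. w = p @ [a, x] @ v @ [b] @ s \<and> a \<notin> set v}"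

definition J_lang :: "'a \<Rightarrow> 'a \<Rightarrow> 'a \<Rightarrow> ('a::finite) list set" where
  "J_lang x a b = {w. \<exists>p v s. w = p @ [a] @ v @ [b] @ s \<and> x \<notin> set v}"

definition K_lang :: "'a \<Rightarrow> 'a \<Rightarrow> 'a \<Rightarrow> ('a::finite) list set" where
  "K_lang x a b = I_lang x a b \<inter> J_lang x a b"

definition L_OBST :: "('a::finite) list set" where
  "L_OBST = (\<Union>x. \<Union>a\<in>UNIV - {x}. \<Union>b\<in>UNIV - {x}. K_lang x a b)"

end

theory Submission
  imports Defs
begin

(* Here $w$ is modelled as delim w, with None as the delimiter, and for a word ws we
   write ws$ for map Some ws @ [None].

   Let u be another word with the same bigram counts and k the first position where
   delim w and delim u differ.  Positions 0 and 1 agree (the bigram starting at the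
   leading delimiter is unique), so k = n + 2, and dropping the first n + 1 symbols
   leaves R = ws$ for the suffix ws = drop n w, and a word R' with the same bigram
   counts, the same first symbol c = ws!0, but a different second symbol.  Let m be
   the first repetition of c not followed by d = ws!1.
   - If a letter of ws[0..m] reappears after m, its first reappearance together with
     the prefix ws[0..m] gives, in one of three cases, letters x, a, b different from x
     with ws in I_{x,a,b} and J_{x,a,b} (lemma return_obstruction).
   - Otherwise the symbols after m form a set that bigrams never leave; R' enters it at
     its second symbol and would have to leave it to realise the bigram (c, d)
     (lemma fresh_tail_impossible).
   Since L_OBST is closed under prepending, the conclusion for ws transfers to w. *)

lemma nth_split_between:
  fixes w :: "'b list"
  assumes "i < j" "j < length w"
  shows "w = take i w @ [w!i] @ map ((!) w) [Suc i..<j] @ [w!j] @ drop (Suc j) w"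
proof (rule nth_equalityI)
  show "length w = length (take i w @ [w!i] @ map ((!) w) [Suc i..<j] @ [w!j] @ drop (Suc j) w)"
    using assms by simp
next
  fix t assume "t < length w"
  then show "w!t = (take i w @ [w!i] @ map ((!) w) [Suc i..<j] @ [w!j] @ drop (Suc j) w) ! t"
    using assms by (cases "t = j") (auto simp: nth_append nth_Cons' not_less)
qed

lemma first_after:
  fixes P :: "nat \<Rightarrow> bool"
  assumes "s < t" "P t"
  shows "\<exists>q. s < q \<and> q \<le> t \<and> P q \<and> (\<forall>r. s < r \<and> r < q \<longrightarrow> \<not> P r)"
proof -
  have "\<exists>q. s < q \<and> P q" using assms by blast
  then obtain q where "s < q \<and> P q" "\<forall>r<q. \<not> (s < r \<and> P r)"
    using exists_least_iff[of "\<lambda>q. s < q \<and> P q"] by blast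
  then show ?thesis using assms by (intro exI[of _ q]) (auto simp: not_less[symmetric])
qed

lemma last_before:
  fixes P :: "nat \<Rightarrow> bool"
  assumes "s \<le> t" "P s"
  shows "\<exists>q. s \<le> q \<and> q \<le> t \<and> P q \<and> (\<forall>r. q < r \<and> r \<le> t \<longrightarrow> \<not> P r)"
  using assms(1)
proof (induction t rule: dec_induct)
  case base
  show ?case using assms(2) by (intro exI[of _ s]) auto
next
  case (step t)
  then obtain q where q: "s \<le> q" "q \<le> t" "P q" "\<forall>r. q < r \<and> r \<le> t \<longrightarrow> \<not> P r" by blast
  show ?case
  proof (cases "P (Suc t)")
    case True
    then show ?thesis using step.hyps(1) by (intro exI[of _ "Suc t"]) auto
  next
    case False
    then show ?thesis using q by (intro exI[of _ q]) (auto simp: le_Suc_eq)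
  qed
qed

lemma I_lang_intro:
  assumes "Suc i < j" "j < length w" "w!i = a" "w!Suc i = x" "w!j = b"
    and "\<And>t. Suc i < t \<Longrightarrow> t < j \<Longrightarrow> w!t \<noteq> a"
  shows "w \<in> I_lang x a b"
proof -
  let ?v = "map ((!) w) [Suc (Suc i)..<j]"
  have "w = take (Suc i) w @ [w!Suc i] @ ?v @ [w!j] @ drop (Suc j) w"
    using assms(1,2) by (rule nth_split_between)
  also have "\<dots> = take i w @ [a, x] @ ?v @ [b] @ drop (Suc j) w"
    using assms by (simp add: take_Suc_conv_app_nth)
  finally have "w = take i w @ [a, x] @ ?v @ [b] @ drop (Suc j) w" .
  moreover have "a \<notin> set ?v"
    by (auto simp: Suc_le_eq dest: assms(6))
  ultimately show ?thesis unfolding I_lang_def by blast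
qed

lemma J_lang_intro:
  assumes "i < j" "j < length w" "w!i = a" "w!j = b"
    and "\<And>t. i < t \<Longrightarrow> t < j \<Longrightarrow> w!t \<noteq> x"
  shows "w \<in> J_lang x a b"
proof -
  let ?v = "map ((!) w) [Suc i..<j]"
  have "w = take i w @ [a] @ ?v @ [b] @ drop (Suc j) w"
    using nth_split_between[OF assms(1,2)] by (simp only: assms(3,4))
  moreover have "x \<notin> set ?v"
    by (auto simp: Suc_le_eq dest: assms(5))
  ultimately show ?thesis unfolding J_lang_def by blast
qed

lemma I_lang_append_left: "w \<in> I_lang x a b \<Longrightarrow> p @ w \<in> I_lang x a b"
proof -
  assume "w \<in> I_lang x a b"
  then obtain q v s where "w = q @ [a, x] @ v @ [b] @ s" "a \<notin> set v"
    unfolding I_lang_def by blast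
  then show "p @ w \<in> I_lang x a b"
    unfolding I_lang_def by (intro CollectI exI[of _ "p @ q"] exI[of _ v] exI[of _ s]) simp
qed

lemma J_lang_append_left: "w \<in> J_lang x a b \<Longrightarrow> p @ w \<in> J_lang x a b"
proof -
  assume "w \<in> J_lang x a b"
  then obtain q v s where "w = q @ [a] @ v @ [b] @ s" "x \<notin> set v"
    unfolding J_lang_def by blast
  then show "p @ w \<in> J_lang x a b"
    unfolding J_lang_def by (intro CollectI exI[of _ "p @ q"] exI[of _ v] exI[of _ s]) simp
qed

lemma L_OBST_intro:
  "w \<in> I_lang x a b \<Longrightarrow> w \<in> J_lang x a b \<Longrightarrow> a \<noteq> x \<Longrightarrow> b \<noteq> x \<Longrightarrow> w \<in> L_OBST"
  unfolding L_OBST_def K_lang_def by auto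

lemma L_OBST_append_left: "w \<in> L_OBST \<Longrightarrow> p @ w \<in> L_OBST"
  unfolding L_OBST_def K_lang_def using I_lang_append_left J_lang_append_left by fast

definition bigram_positions :: "'b list \<Rightarrow> 'b \<Rightarrow> 'b \<Rightarrow> nat set" where
  "bigram_positions z s t = {k. Suc k < length z \<and> z!k = s \<and> z!Suc k = t}"

lemma finite_bigram_positions: "finite (bigram_positions z s t)"
  unfolding bigram_positions_def by (rule finite_subset[of _ "{..<length z}"]) auto

lemma bigram_card: "bigram z s t = card (bigram_positions z s t)"
  unfolding bigram_def bigram_positions_def ..

lemma bigram_pos:
  "0 < bigram z s t \<longleftrightarrow> (\<exists>k. Suc k < length z \<and> z!k = s \<and> z!Suc k = t)"
  using finite_bigram_positions[of z s t]
  by (auto simp: bigram_card card_gt_0_iff bigram_positions_def)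

lemma bigram_split:
  "bigram z s t = bigram (take (Suc k) z) s t + bigram (drop k z) s t"
proof -
  let ?A = "bigram_positions z s t"
  have pre: "bigram_positions (take (Suc k) z) s t = {p\<in>?A. p < k}"
    unfolding bigram_positions_def by auto
  have shift: "(\<lambda>p. p + k) ` bigram_positions (drop k z) s t = {p\<in>?A. k \<le> p}"
  proof (rule set_eqI)
    fix p
    show "p \<in> (\<lambda>p. p + k) ` bigram_positions (drop k z) s t \<longleftrightarrow> p \<in> {p\<in>?A. k \<le> p}"
      unfolding bigram_positions_def by (auto simp: image_iff add.commute intro!: exI[of _ "p - k"])
  qed
  have "card ((\<lambda>p. p + k) ` bigram_positions (drop k z) s t) = bigram (drop k z) s t"
    unfolding bigram_card by (rule card_image) (simp add: inj_on_def)
  then have suf: "card {p\<in>?A. k \<le> p} = bigram (drop k z) s t"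
    by (simp only: shift)
  have "?A = {p\<in>?A. p < k} \<union> {p\<in>?A. k \<le> p}" by auto
  then have "card ?A = card {p\<in>?A. p < k} + card {p\<in>?A. k \<le> p}"
    using finite_bigram_positions[of z s t]
    by (metis (no_types, lifting) card_Un_disjoint finite_Un disjoint_iff mem_Collect_eq not_le)
  then show ?thesis using suf pre by (simp add: bigram_card)
qed

lemma bigram_drop_common_prefix:
  assumes "take (Suc k) z = take (Suc k) z'" "bigram z = bigram z'"
  shows "bigram (drop k z) = bigram (drop k z')"
proof (intro ext)
  fix s t
  show "bigram (drop k z) s t = bigram (drop k z') s t"
    using bigram_split[of z s t k] bigram_split[of z' s t k] assms by simp
qed

lemma bigram_closed_propagation:
  assumes closed: "\<And>s t. 0 < bigram z s t \<Longrightarrow> s \<in> L \<Longrightarrow> t \<in> L"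
    and "k \<le> i" "i < length z" "z!k \<in> L"
  shows "z!i \<in> L"
  using assms(2-)
proof (induction i rule: dec_induct)
  case (step i)
  then have "0 < bigram z (z!i) (z!Suc i)" unfolding bigram_pos by auto
  with step show ?case using closed by simp
qed simp

lemma first_mismatch:
  assumes "i < length xs" "i < length ys" "xs!i \<noteq> ys!i"
  shows "\<exists>k. k < length xs \<and> k < length ys \<and> xs!k \<noteq> ys!k \<and> take k xs = take k ys"
proof -
  let ?D = "\<lambda>k. k < length xs \<and> k < length ys \<and> xs!k \<noteq> ys!k"
  obtain k where "?D k" and below: "\<forall>l<k. \<not> ?D l"
    using exists_least_iff[of ?D] assms by blast
  moreover have "take k xs = take k ys"
    using \<open>?D k\<close> below by (intro nth_equalityI) auto
  ultimately show ?thesis by blast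
qed

lemma delim_nth:
  "i < length w + 2 \<Longrightarrow> delim w ! i = (if i = 0 \<or> i = length w + 1 then None else Some (w!(i - 1)))"
  unfolding delim_def by (cases i) (auto simp: nth_append)

lemma delim_mismatch:
  assumes "delim u \<noteq> delim w"
  shows "\<exists>i. i < length (delim u) \<and> i < length (delim w) \<and> delim u ! i \<noteq> delim w ! i"
proof (cases "length u = length w")
  case True
  then show ?thesis using assms nth_equalityI[of "delim u" "delim w"] by (auto simp: delim_def)
next
  case False
  define i where "i = min (length u) (length w) + 1"
  have "delim u ! i \<noteq> delim w ! i" using False delim_nth[of i u] delim_nth[of i w]
    unfolding i_def by auto
  moreover have "i < length (delim u)" "i < length (delim w)"
    unfolding i_def delim_def by auto
  ultimately show ?thesis by blast
qed

lemma delim_second: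
  assumes "bigram (delim u) = bigram (delim w)"
  shows "delim u ! 1 = delim w ! 1"
proof -
  have "0 < bigram (delim w) None (delim w ! 1)"
    unfolding bigram_pos by (intro exI[of _ 0]) (simp add: delim_def)
  then obtain r where r: "Suc r < length (delim u)" "delim u ! r = None" "delim u ! Suc r = delim w ! 1"
    unfolding assms[symmetric] bigram_pos by blast
  then have "r = 0" using delim_nth[of r u] by (auto simp: delim_def split: if_splits)
  then show ?thesis using r by simp
qed

lemma delim_drop:
  "n \<le> length w \<Longrightarrow> drop (Suc n) (delim w) = map Some (drop n w) @ [None]"
  unfolding delim_def by (simp add: drop_map)

lemma return_obstruction:
  fixes ws :: "('a::finite) list" and m j :: nat
  defines "B \<equiv> (!) ws ` {..m}"
  assumes "0 < m" "m < j" "j < length ws"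
    and "ws!m = ws!0"
    and before: "\<And>q. q < m \<Longrightarrow> ws!q = ws!0 \<Longrightarrow> ws!Suc q = ws!1"
    and deviation: "ws!Suc m \<noteq> ws!1"
    and "ws!j \<in> B"
    and fresh: "\<And>t. m < t \<Longrightarrow> t < j \<Longrightarrow> ws!t \<notin> B"
  shows "ws \<in> L_OBST"
proof -
  define c d b where "c = ws!0" and "d = ws!1" and "b = ws!j"
  have "c \<in> B" "d \<in> B" using assms(2) unfolding B_def c_def d_def by auto
  then have no_c: "ws!t \<noteq> c" and no_d: "ws!t \<noteq> d" if "m < t" "t < j" for t
    using fresh[OF that] by auto
  consider "b = d" | "b = c" "b \<noteq> d" | "b \<noteq> c" "b \<noteq> d" by blast
  then show ?thesis
  proof cases
    case 1
    define x where "x = ws!Suc m"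
    have "Suc m \<noteq> j" using deviation 1 unfolding b_def d_def by auto
    then have mj: "Suc m < j" using assms(3) by simp
    have "x \<noteq> c" "x \<noteq> d" using no_c no_d mj unfolding x_def by auto
    moreover have I: "ws \<in> I_lang x c b"
      by (rule I_lang_intro[of m j]) (use mj assms(4,5) no_c in \<open>auto simp: c_def x_def b_def\<close>)
    moreover have J: "ws \<in> J_lang x c b"
      by (rule J_lang_intro[of 0 1]) (use assms(2-4) 1 in \<open>auto simp: c_def d_def\<close>)
    ultimately show ?thesis using 1 L_OBST_intro[OF I J] by blast
  next
    case 2
    obtain q where q: "0 < q" "q \<le> m" "ws!q = c" "\<And>r. 0 < r \<Longrightarrow> r < q \<Longrightarrow> ws!r \<noteq> c"
      using first_after[of 0 m "\<lambda>q. ws!q = c"] assms(2,5) unfolding c_def by auto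
    have "q \<noteq> 1" using q(3) 2 unfolding d_def b_def c_def by auto
    then have I: "ws \<in> I_lang d c c"
      by (intro I_lang_intro[of 0 q]) (use q assms(3,4) in \<open>auto simp: c_def d_def\<close>)
    have J: "ws \<in> J_lang d c c"
      by (rule J_lang_intro[of m j]) (use assms(3-5) 2 no_d in \<open>auto simp: c_def b_def\<close>)
    show ?thesis using 2 L_OBST_intro[OF I J] by blast
  next
    case 3
    obtain t where t: "t \<le> m" "ws!t = b" using assms(8) unfolding B_def b_def by auto
    obtain q where q: "q \<le> t" "ws!q = c" and no_c': "\<And>r. q < r \<Longrightarrow> r \<le> t \<Longrightarrow> ws!r \<noteq> c"
      using last_before[of 0 t "\<lambda>q. ws!q = c"] unfolding c_def by auto
    have "q \<noteq> t" using q(2) t(2) 3 by auto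
    have "t \<noteq> m" using t(2) 3 assms(5) c_def by auto
    have "q < m" using q(1) t(1) \<open>q \<noteq> t\<close> \<open>t \<noteq> m\<close> by simp
    then have succ: "ws!Suc q = d" using before[of q] q(2) unfolding c_def d_def by blast
    have qt: "Suc q < t" using succ \<open>q \<noteq> t\<close> q(1) t(2) 3 by (cases "Suc q = t") auto
    have "c \<noteq> d" using no_c'[of "Suc q"] qt succ by auto
    moreover have I: "ws \<in> I_lang d c b"
      by (rule I_lang_intro[OF qt _ q(2) succ t(2) no_c']) (use t(1) assms(3,4) in auto)
    moreover have J: "ws \<in> J_lang d c b"
      by (rule J_lang_intro[of m j]) (use assms(3-5) no_d in \<open>auto simp: c_def b_def\<close>)
    ultimately show ?thesis using 3 L_OBST_intro[OF I J] by blast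
  qed
qed

text \<open>If every letter after position m is new (absent from ws[0..m]), no word with the
  bigram counts of ws$ can have second symbol (ws$)!(m+1) unless that equals (ws$)!1: the
  symbols after m form a set that no bigram leaves, which the bigram (ws$)!0 (ws$)!1 would
  have to do.\<close>

lemma fresh_tail_impossible:
  fixes ws :: "'a list" and R' :: "'a option list"
  defines "R \<equiv> map Some ws @ [None]"
  assumes "m < length ws"
    and fresh: "\<And>i. m < i \<Longrightarrow> i < length ws \<Longrightarrow> ws!i \<notin> (!) ws ` {..m}"
    and same: "bigram R' = bigram R"
    and "R'!1 = R!Suc m" "R'!1 \<noteq> R!1"
  shows False
proof -
  define L where "L = {R!i | i. m < i \<and> i < length R}"
  have len: "length R = Suc (length ws)" and R_last: "R!length ws = None"
    unfolding R_def by (simp_all add: nth_append)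
  have R_nth: "R!i = Some (ws!i)" if "i < length ws" for i
    using that unfolding R_def by (simp add: nth_append)
  have head_not_in_L: "R!i \<notin> L" if "i \<le> m" for i
  proof
    assume "R!i \<in> L"
    then obtain i' where i': "m < i'" "i' < length R" "R!i' = R!i" unfolding L_def by auto
    have Ri: "R!i = Some (ws!i)" using that assms(2) by (intro R_nth) simp
    have "i' \<noteq> length ws" using i'(3) Ri R_last by auto
    then have "i' < length ws" using i'(2) len by simp
    then have "ws!i' = ws!i" using i'(3) Ri R_nth[of i'] by simp
    moreover have "ws!i \<in> (!) ws ` {..m}" using that by simp
    ultimately show False using fresh[OF i'(1) \<open>i' < length ws\<close>] by simp
  qed
  have closed: "t \<in> L" if pos: "0 < bigram R' s t" and sL: "s \<in> L" for s t
  proof -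
    obtain k where k: "Suc k < length R" "R!k = s" "R!Suc k = t"
      using pos unfolding same bigram_pos by blast
    have "m < k"
    proof (rule ccontr)
      assume "\<not> m < k"
      then show False using head_not_in_L[of k] sL k(2) by simp
    qed
    then show ?thesis using k unfolding L_def by auto
  qed
  have "0 < bigram R (R!0) (R!1)"
    unfolding bigram_pos using assms(2) len by (intro exI[of _ 0]) auto
  then obtain r where r: "Suc r < length R'" "R'!r = R!0" "R'!Suc r = R!1"
    unfolding same[symmetric] bigram_pos by blast
  have "r \<noteq> 0" using r(3) assms(6) by (cases r) auto
  have "R'!1 \<in> L"
    unfolding L_def using assms(2,5) len by (intro CollectI exI[of _ "Suc m"]) simp
  have "R'!r \<in> L"
    by (rule bigram_closed_propagation[OF closed, where k = 1])
      (use \<open>r \<noteq> 0\<close> r(1) \<open>R'!1 \<in> L\<close> in auto)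
  then show False using r(2) head_not_in_L[of 0] by simp
qed

text \<open>Any word R' with the bigram counts of ws$, the same first symbol and a different
  second symbol forces ws into L_OBST: the first deviating repetition m of ws!0 either
  leads to return_obstruction or is excluded by fresh_tail_impossible.\<close>

lemma deviation_obstruction:
  fixes ws :: "('a::finite) list" and R' :: "'a option list"
  defines "R \<equiv> map Some ws @ [None]"
  assumes same: "bigram R' = bigram R" and "Suc 0 < length R'"
    and "R'!0 = R!0" "R'!1 \<noteq> R!1"
  shows "ws \<in> L_OBST"
proof -
  define c where "c = ws!0"
  have R_nth: "R!i = Some (ws!i)" if "i < length ws" for i
    using that unfolding R_def by (simp add: nth_append)
  have "0 < bigram R' (R'!0) (R'!1)"
    unfolding bigram_pos using assms(3) by (intro exI[of _ 0]) simp
  then obtain p where p: "Suc p < length R" "R!p = R!0" "R!Suc p = R'!1"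
    unfolding same bigram_pos assms(4) by blast
  then have "p < length ws" by (simp add: R_def)
  then have "ws!p = c" using p(2) R_nth[of p] R_nth[of 0] unfolding c_def by fastforce
  have "p \<noteq> 0" using p(3) assms(5) by (cases p) auto
  define dev where "dev q \<longleftrightarrow> ws!q = c \<and> R!Suc q \<noteq> R!1" for q
  obtain m where "0 < m" "m \<le> p" "dev m" and below: "\<And>q. 0 < q \<Longrightarrow> q < m \<Longrightarrow> \<not> dev q"
    using first_after[of 0 p dev] \<open>p \<noteq> 0\<close> \<open>ws!p = c\<close> p(3) assms(5) unfolding dev_def by auto
  have before: "R!Suc q = R!1" if "q < m" "ws!q = c" for q
    using below[of q] that unfolding dev_def by (cases q) auto
  show ?thesis
  proof (cases "\<exists>j. m < j \<and> j < length ws \<and> ws!j \<in> (!) ws ` {..m}")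
    case True
    then obtain j0 where j0: "m < j0" "j0 < length ws" "ws!j0 \<in> (!) ws ` {..m}" by blast
    then obtain j where j: "m < j" "j \<le> j0" "ws!j \<in> (!) ws ` {..m}"
      and between: "\<And>t. m < t \<Longrightarrow> t < j \<Longrightarrow> ws!t \<notin> (!) ws ` {..m}"
      using first_after[of m j0 "\<lambda>j. ws!j \<in> (!) ws ` {..m}"] by blast
    have "j < length ws" using j j0 by simp
    show ?thesis
    proof (rule return_obstruction[OF \<open>0 < m\<close> \<open>m < j\<close> \<open>j < length ws\<close> _ _ _ j(3) between])
      show "ws!m = ws!0" using \<open>dev m\<close> unfolding dev_def c_def by simp
      show "ws!Suc q = ws!1" if "q < m" "ws!q = ws!0" for q
        using before[of q] that \<open>j < length ws\<close> \<open>m < j\<close> \<open>0 < m\<close> R_nth[of "Suc q"] R_nth[of 1]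
        unfolding c_def by simp
      show "ws!Suc m \<noteq> ws!1"
        using \<open>dev m\<close> \<open>j < length ws\<close> \<open>m < j\<close> \<open>0 < m\<close> R_nth[of "Suc m"] R_nth[of 1]
        unfolding dev_def by simp
    qed
  next
    case False
    have "\<not> m < p"
      using False \<open>p < length ws\<close> \<open>ws!p = c\<close> unfolding c_def by auto
    then have "R'!1 = R!Suc m" using \<open>m \<le> p\<close> p(3) by simp
    moreover have "m < length ws" using \<open>m \<le> p\<close> \<open>p < length ws\<close> by simp
    moreover have "ws!i \<notin> (!) ws ` {..m}" if "m < i" "i < length ws" for i
      using False that by blast
    ultimately show ?thesis
      using fresh_tail_impossible[of m ws R', folded R_def] same assms(5) by blast
  qed
qed

text \<open>Strip the common prefix of the two delimited words up to their first mismatch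
  (at position n + 2) and apply deviation_obstruction to the suffix drop n w.\<close>

theorem lemma4:
  shows "(UNIV :: ('a::finite) list set) - L_UNIQ \<subseteq> L_OBST"
proof
  fix w :: "'a list"
  assume "w \<in> UNIV - L_UNIQ"
  then obtain u :: "'a list" where same: "bigram (delim u) = bigram (delim w)"
    and "delim u \<noteq> delim w" unfolding L_UNIQ_def by auto
  obtain i where "i < length (delim u)" "i < length (delim w)" "delim u ! i \<noteq> delim w ! i"
    using delim_mismatch[OF \<open>delim u \<noteq> delim w\<close>] by blast
  then obtain k where k: "k < length (delim u)" "k < length (delim w)"
      "delim u ! k \<noteq> delim w ! k" and prefix: "take k (delim u) = take k (delim w)"
    using first_mismatch by blast
  have "k \<noteq> 0" using k(3) by (cases k) (auto simp: delim_def)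
  moreover have "k \<noteq> 1" using k(3) delim_second[OF same] by auto
  ultimately obtain n where n: "k = Suc (Suc n)"
    by (metis One_nat_def not0_implies_Suc)
  define R R' where "R = drop (Suc n) (delim w)" and "R' = drop (Suc n) (delim u)"
  have R: "R = map Some (drop n w) @ [None]"
    unfolding R_def using k(2) n by (intro delim_drop) (simp add: delim_def)
  have "bigram R' = bigram R"
    unfolding R_def R'_def using prefix n same by (intro bigram_drop_common_prefix) auto
  moreover have "Suc 0 < length R'"
    using k(1) n unfolding R'_def by simp
  moreover have "R'!0 = R!0"
    using arg_cong[OF prefix, of "\<lambda>xs. xs ! Suc n"] k n unfolding R_def R'_def by simp
  moreover have "R'!1 \<noteq> R!1"
    using k n unfolding R_def R'_def by auto
  ultimately have "drop n w \<in> L_OBST"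
    unfolding R by (rule deviation_obstruction)
  then show "w \<in> L_OBST"
    using L_OBST_append_left[of "drop n w" "take n w"] by simp
qed

end
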